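(* 1. Assume that there exist fixed positive constants $k,K$ such that $\sup_{\Vert \Delta\Vert_{2}=1} \Vert \langle \Delta, \phi(Z) \rangle \Vert_{\psi_{2}}\leq K$, $k\leq \lambda_{min}(\Sigma_{1})\leq\lambda_{max}(\Sigma_{1})\leq K$, where $\Sigma_1=E\{\phi(Z)\phi(Z)^{\top}\}$, and that the link $\varphi$ satisfies $$\vert \varphi(u) -\varphi(v)\vert \leq K\exp\{ K ( \vert u\vert+\vert v \vert ) \} \vert u -v\vert \quad \text{for all } u,v \in\mathbb{R}.$$ Take $l \in \{1,2\}$, $\alpha>1/l$ and $M>0$. Let $\overline{l}=2$ if $l=1$ and $\overline{l}=1$ if $l=2$. Consider the class $\mathcal{W}_{n}(\phi,t,\alpha,l,M,\varphi)$ of functions $c(Z)=\varphi(\langle\theta,\phi(Z)\rangle)$ with $\theta\in\mathbb{R}^p$ satisfying $\max_{j\leq p} j^{\alpha}|\theta_{(j)}|\leq t(n)$ and $\Vert\theta\Vert_2\leq M$, for a sequence $t(n)$ satisfying $t(n)^{1/\alpha}(\log(p)/n)^{1-1/(l\alpha)}\to 0$ and $t(n)^{1/\alpha}(n/\log(p))^{1/(l\alpha)}\leq p$. Let $$s=t(n)^{1/\alpha} \left(\frac{n}{\log(p)}\right)^{1/(l\alpha)}.$$ Then $\mathcal{W}_{n}(\phi,t,\alpha,l,M,\varphi)$ is contained in the AGLS class $\mathcal{G}_{n}(\phi, s, \overline{l}, \varphi)$. Moreover, for each $q\in(0,2)$, the class $\mathcal{N}_{n}(\phi, t,q,M,\varphi)$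 of functions $c(Z)=\varphi(\langle\theta,\phi(Z)\rangle)$ with $\sum_{j=1}^p|\theta_j|^q\leq t(n)$ and $\Vert\theta\Vert_2\leq M$, for a sequence $t(n)$ satisfying $t(n)(\log(p)/n)^{1-q/2}\to 0$ and $t(n)(n/\log(p))^{q/2}\leq p$, is contained in $\mathcal{W}_{n}(\phi,t^{1/q}, 1/q,2,M, \varphi)$. 2. Assume that there exists a fixed positive constant $K$ such that the density of $Z$ satisfies $f_{Z}(z)\leq K$ for all $z$, and that $\{ \phi_{j} \}_{j\in\mathbb{N}}$ is an orthonormal basis of $L_{2}[0,1]^{d}$, for a fixed $d$. Take $l \in \{1,2\}$ and $\alpha>1/l$. Let $\overline{l}=2$ if $l=1$ and $\overline{l}=1$ if $l=2$. Consider the class $\mathcal{S}_{n}(\phi,t,\alpha,l)$ of functions $c$ such that there exist $p=p(n)$ and a permutation $\{\phi_{\pi(j)}\}$ of the first $p$ elements of the basis with $$c(Z)=\sum_{j=1}^{p}\theta_{j}\phi_{\pi(j)}(Z)+\sum_{j=p+1}^{\infty}\theta_{j}\phi_{j}(Z),$$ where $|\theta_j|j^{\alpha}\leq t(n)$ for all $j$ and $t(n)^{1/\alpha}(\log(p)/n)^{1-1/(l\alpha)}\to 0$ and $t(n)^{1/\alpha}(n/\log(p))^{1/(l\alpha)}\leq p$. Let $$s=t(n)^{1/\alpha} \left(\frac{n}{\log(p)}\right)^{1/(l\alpha)}.$$ Then $\mathcal{S}_{n}(\phi,t,\alpha,l)$ is contained in the AGLS class $\mathcal{G}_{n}(\phi^{n},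 s, \overline{l}, \mathrm{id})$ with $\phi^{n}=(\phi_{1},\dots,\phi_{p(n)})$.
   Context: For a random variable $W$, $\Vert W\Vert_{\psi_2}=\sup_{k\in\mathbb{N}} (E|W|^k)^{1/k}/\sqrt{k}$. For $\theta\in\mathbb{R}^p$, $|\theta_{(p)}|\leq\dots\leq|\theta_{(1)}|$ are the sorted absolute values of its entries and $\Vert\theta\Vert_0$ is the number of nonzero entries. The approximately generalized linear-sparse (AGLS) class $\mathcal{G}_n(\phi,s,j,\varphi)$, for an $\mathbb{R}^p$-valued function $\phi(Z)$, integer $s$, $j\in\{1,2\}$ and link $\varphi$, consists of functions $c(Z)$ such that there exist $\theta^*\in\mathbb{R}^p$ with $\Vert\theta^*\Vert_0\leq s$ and a function $r(Z)$ with $c(Z)=\varphi(\langle\theta^*,\phi(Z)\rangle)+r(Z)$ and $E[r(Z)^2]\leq K(s\log(p)/n)^j$ for a fixed constant $K$. Here $p=p(n)$ and all quantities may depend on $n$; $\mathrm{id}$ denotes the identity link. *)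

theory Defs
  imports "HOL-Probability.Probability"
begin

text \<open>Vectors in R^p are represented as functions nat => real, using coordinates 0..<p
  (coordinates beyond p are set to 0). The paper's 1-based index j corresponds to j-1 here.\<close>

definition inner_p :: "nat \<Rightarrow> (nat \<Rightarrow> real) \<Rightarrow> (nat \<Rightarrow> real) \<Rightarrow> real" where
  "inner_p p a b = (\<Sum>i<p. a i * b i)"

definition norm2_p :: "nat \<Rightarrow> (nat \<Rightarrow> real) \<Rightarrow> real" where
  "norm2_p p a = sqrt (\<Sum>i<p. (a i)\<^sup>2)"

definition l0_p :: "nat \<Rightarrow> (nat \<Rightarrow> real) \<Rightarrow> nat" where
  "l0_p p a = card {i. i < p \<and> a i \<noteq> 0}"

text \<open>sorted_abs p a j = |a_(j)|, the j-th largest absolute value (1 <= j <= p).\<close>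
definition sorted_abs :: "nat \<Rightarrow> (nat \<Rightarrow> real) \<Rightarrow> nat \<Rightarrow> real" where
  "sorted_abs p a j = rev (sort (map (\<lambda>i. \<bar>a i\<bar>) [0..<p])) ! (j - 1)"

text \<open>psi_2 norm bounded by C: sup over k in N (k >= 1) of (E|W|^k)^(1/k)/sqrt k <= C.\<close>
definition psi2_le :: "'z measure \<Rightarrow> ('z \<Rightarrow> real) \<Rightarrow> real \<Rightarrow> bool" where
  "psi2_le M W C \<longleftrightarrow> W \<in> borel_measurable M \<and>
     (\<forall>k::nat. k \<ge> 1 \<longrightarrow> integrable M (\<lambda>z. \<bar>W z\<bar> ^ k) \<and>
        (\<integral>z. \<bar>W z\<bar> ^ k \<partial>M) powr (1 / real k) \<le> C * sqrt (real k))"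

definition Sigma1 :: "'z measure \<Rightarrow> ('z \<Rightarrow> nat \<Rightarrow> real) \<Rightarrow> nat \<Rightarrow> nat \<Rightarrow> real" where
  "Sigma1 M \<phi> i j = (\<integral>z. \<phi> z i * \<phi> z j \<partial>M)"

definition is_eigenvalue_p :: "nat \<Rightarrow> (nat \<Rightarrow> nat \<Rightarrow> real) \<Rightarrow> real \<Rightarrow> bool" where
  "is_eigenvalue_p p A lam \<longleftrightarrow>
     (\<exists>v. (\<exists>i<p. v i \<noteq> 0) \<and> (\<forall>i<p. (\<Sum>j<p. A i j * v j) = lam * v i))"

definition AGLS :: "'z measure \<Rightarrow> ('z \<Rightarrow> nat \<Rightarrow> real) \<Rightarrow> nat \<Rightarrow> nat \<Rightarrow> real \<Rightarrow> nat
     \<Rightarrow> (real \<Rightarrow> real) \<Rightarrow> real \<Rightarrow> ('z \<Rightarrow> real) \<Rightarrow> bool" where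
  "AGLS M \<phi> p n s j link K c \<longleftrightarrow>
     (\<exists>\<theta> r. (\<forall>i\<ge>p. \<theta> i = 0) \<and> real (l0_p p \<theta>) \<le> s \<and>
        (\<forall>z\<in>space M. c z = link (inner_p p \<theta> (\<phi> z)) + r z) \<and>
        r \<in> borel_measurable M \<and> integrable M (\<lambda>z. (r z)\<^sup>2) \<and>
        (\<integral>z. (r z)\<^sup>2 \<partial>M) \<le> K * (s * ln (real p) / real n) ^ j)"

definition Wclass :: "'z measure \<Rightarrow> ('z \<Rightarrow> nat \<Rightarrow> real) \<Rightarrow> nat \<Rightarrow> real \<Rightarrow> real \<Rightarrow> real
     \<Rightarrow> (real \<Rightarrow> real) \<Rightarrow> ('z \<Rightarrow> real) \<Rightarrow> bool" where
  "Wclass M \<phi> p t \<alpha> Mb link c \<longleftrightarrow>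
     (\<exists>\<theta>. (\<forall>i\<ge>p. \<theta> i = 0) \<and>
        (\<forall>j\<in>{1..p}. real j powr \<alpha> * sorted_abs p \<theta> j \<le> t) \<and>
        norm2_p p \<theta> \<le> Mb \<and>
        (\<forall>z\<in>space M. c z = link (inner_p p \<theta> (\<phi> z))))"

definition Nclass :: "'z measure \<Rightarrow> ('z \<Rightarrow> nat \<Rightarrow> real) \<Rightarrow> nat \<Rightarrow> real \<Rightarrow> real \<Rightarrow> real
     \<Rightarrow> (real \<Rightarrow> real) \<Rightarrow> ('z \<Rightarrow> real) \<Rightarrow> bool" where
  "Nclass M \<phi> p t q Mb link c \<longleftrightarrow>
     (\<exists>\<theta>. (\<forall>i\<ge>p. \<theta> i = 0) \<and>
        (\<Sum>j<p. \<bar>\<theta> j\<bar> powr q) \<le> t \<and>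
        norm2_p p \<theta> \<le> Mb \<and>
        (\<forall>z\<in>space M. c z = link (inner_p p \<theta> (\<phi> z))))"

definition unit_cube :: "(real^'d) set" where
  "unit_cube = {x. \<forall>i. 0 \<le> x $ i \<and> x $ i \<le> 1}"

definition L2cube :: "(real^'d \<Rightarrow> real) \<Rightarrow> bool" where
  "L2cube g \<longleftrightarrow> g \<in> borel_measurable (lebesgue_on unit_cube) \<and>
     integrable (lebesgue_on unit_cube) (\<lambda>x. (g x)\<^sup>2)"

definition L2inner :: "(real^'d \<Rightarrow> real) \<Rightarrow> (real^'d \<Rightarrow> real) \<Rightarrow> real" where
  "L2inner g h = (\<integral>x. g x * h x \<partial>lebesgue_on unit_cube)"

definition L2_onb :: "(nat \<Rightarrow> real^'d \<Rightarrow> real) \<Rightarrow> bool" where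
  "L2_onb \<phi> \<longleftrightarrow> (\<forall>j. L2cube (\<phi> j)) \<and>
     (\<forall>i j. L2inner (\<phi> i) (\<phi> j) = (if i = j then 1 else 0)) \<and>
     (\<forall>g. L2cube g \<longrightarrow> (\<forall>\<epsilon>>0. \<exists>N a.
        (\<integral>x. (g x - (\<Sum>j<N. a j * \<phi> j x))\<^sup>2 \<partial>lebesgue_on unit_cube) < \<epsilon>))"

text \<open>Class S_n(phi, t, alpha, l) for given p = p(n) and t = t(n); the paper's
  1-based index j corresponds to j-1 here, so the weight j^alpha becomes (j+1)^alpha.
  The infinite series is understood as a limit in L_2[0,1]^d.\<close>
definition Sclass :: "(nat \<Rightarrow> real^'d \<Rightarrow> real) \<Rightarrow> nat \<Rightarrow> real \<Rightarrow> real
     \<Rightarrow> (real^'d \<Rightarrow> real) \<Rightarrow> bool" where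
  "Sclass \<phi> p t \<alpha> c \<longleftrightarrow> L2cube c \<and>
     (\<exists>\<theta> \<pi>. bij_betw \<pi> {..<p} {..<p} \<and>
        (\<forall>j. \<bar>\<theta> j\<bar> * real (Suc j) powr \<alpha> \<le> t) \<and>
        (\<lambda>N. \<integral>x. (c x - (\<Sum>j<p. \<theta> j * \<phi> (\<pi> j) x) - (\<Sum>j\<in>{p..<N}. \<theta> j * \<phi> j x))\<^sup>2
              \<partial>lebesgue_on unit_cube) \<longlonglongrightarrow> 0)"

end

(*
  Let m = floor s.  If the sorted coefficients satisfy |theta_(j)| <= t j^(-alpha), keeping
  the m largest of them gives an s-sparse theta_S with
    |theta - theta_S|^2 <= 2 alpha / (2 alpha - 1) * t^2 (m + 1)^(1 - 2 alpha),
  and the choice of s makes the right-hand side at most (s log p / n)^(3 - l).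
  For W_n, the exponential local Lipschitz bound on the link controls
  link <theta, phi(Z)> - link <theta_S, phi(Z)> pointwise by |<theta - theta_S, phi(Z)>|
  times exponentials of sub-Gaussian projections, whose moments are bounded uniformly in n;
  so the remainder has second moment of order |theta - theta_S|^2.  For S_n the same
  truncation is done in the permuted basis: Parseval turns the coefficient tail into an
  L2 bound on [0,1]^d, and f <= K transfers it to P.  For N_n, j |theta_(j)|^q is at most
  sum_i |theta_i|^q.
*)
theory Submission
  imports Defs
begin

section \<open>Vectors in coordinates 0..<p\<close>

lemma l0_p_le_card:
  assumes "finite S" "\<And>i. i < p \<Longrightarrow> a i \<noteq> 0 \<Longrightarrow> i \<in> S"
  shows "l0_p p a \<le> card S"
  unfolding l0_p_def using assms by (intro card_mono) auto

lemma norm2_p_nonneg: "norm2_p p a \<ge> 0"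
  unfolding norm2_p_def by (simp add: sum_nonneg)

lemma inner_p_diff: "inner_p p (\<lambda>i. a i - b i) x = inner_p p a x - inner_p p b x"
  unfolding inner_p_def by (simp add: left_diff_distrib sum_subtractf)

lemma inner_p_unit_decomp:
  assumes p: "p \<ge> 1"
  obtains e where "norm2_p p e = 1" "\<And>x. inner_p p a x = norm2_p p a * inner_p p e x"
proof (cases "norm2_p p a = 0")
  case True
  then have "\<forall>i<p. a i = 0" unfolding norm2_p_def by (simp add: sum_nonneg_eq_0_iff)
  then have "inner_p p a x = 0" for x unfolding inner_p_def by simp
  moreover have "norm2_p p (\<lambda>i. if i = 0 then 1 else 0) = 1"
    unfolding norm2_p_def using p by (simp add: if_distrib[of power2] sum.delta cong: if_cong)
  ultimately show ?thesis using that True by auto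
next
  case False
  with norm2_p_nonneg[of p a] have N: "norm2_p p a > 0" by simp
  have "(norm2_p p a)\<^sup>2 = (\<Sum>i<p. (a i)\<^sup>2)" unfolding norm2_p_def by (simp add: sum_nonneg)
  then have "norm2_p p (\<lambda>i. a i / norm2_p p a) = 1"
    using N unfolding norm2_p_def by (simp add: power_divide flip: sum_divide_distrib)
  moreover have "inner_p p a x = norm2_p p a * inner_p p (\<lambda>i. a i / norm2_p p a) x" for x
    unfolding inner_p_def using N by (simp add: sum_distrib_left)
  ultimately show ?thesis using that by blast
qed

section \<open>Sorted absolute values\<close>

lemma sorted_abs_permutation:
  obtains \<sigma> where "\<sigma> permutes {..<p}" "\<And>i. i < p \<Longrightarrow> sorted_abs p a (Suc i) = \<bar>a (\<sigma> i)\<bar>"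
proof -
  define xs where "xs = map (\<lambda>i. \<bar>a i\<bar>) [0..<p]"
  have "mset (rev (sort xs)) = mset xs" by simp
  then obtain \<sigma> where \<sigma>: "\<sigma> permutes {..<length xs}" "permute_list \<sigma> xs = rev (sort xs)"
    by (rule mset_eq_permutation)
  have "sorted_abs p a (Suc i) = \<bar>a (\<sigma> i)\<bar>" if "i < p" for i
  proof -
    have "\<sigma> i < p" using permutes_in_image[OF \<sigma>(1)] that by (simp add: xs_def)
    then show ?thesis
      using permute_list_nth[OF \<sigma>(1), of i] that \<sigma>(2) by (simp add: sorted_abs_def xs_def)
  qed
  with \<sigma>(1) show ?thesis by (intro that) (simp_all add: xs_def)
qed

lemma sorted_abs_antimono:
  assumes "1 \<le> i" "i \<le> j" "j \<le> p"
  shows "sorted_abs p a j \<le> sorted_abs p a i"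
  unfolding sorted_abs_def using assms by (intro sorted_rev_nth_mono) (simp_all add: rev_nth)

lemma sorted_abs_nonneg:
  assumes "1 \<le> j" "j \<le> p"
  shows "0 \<le> sorted_abs p a j"
proof -
  obtain \<sigma> where "\<And>i. i < p \<Longrightarrow> sorted_abs p a (Suc i) = \<bar>a (\<sigma> i)\<bar>"
    using sorted_abs_permutation[of p a] by blast
  from this[of "j - 1"] assms show ?thesis by simp
qed

lemma sorted_abs_powr_le_sum:
  assumes q: "q > 0" and j: "1 \<le> j" "j \<le> p"
  shows "real j * sorted_abs p a j powr q \<le> (\<Sum>i<p. \<bar>a i\<bar> powr q)"
proof -
  obtain \<sigma> where \<sigma>: "\<sigma> permutes {..<p}" "\<And>i. i < p \<Longrightarrow> sorted_abs p a (Suc i) = \<bar>a (\<sigma> i)\<bar>"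
    using sorted_abs_permutation[of p a] by blast
  have "real j * sorted_abs p a j powr q = (\<Sum>i<j. sorted_abs p a j powr q)" by simp
  also have "\<dots> \<le> (\<Sum>i<j. sorted_abs p a (Suc i) powr q)"
  proof (intro sum_mono powr_mono2)
    fix i assume "i \<in> {..<j}"
    then show "sorted_abs p a j \<le> sorted_abs p a (Suc i)"
      using j by (intro sorted_abs_antimono) auto
    show "0 \<le> sorted_abs p a j" using j by (rule sorted_abs_nonneg)
  qed (use q in auto)
  also have "\<dots> = (\<Sum>i<j. \<bar>a (\<sigma> i)\<bar> powr q)" using \<sigma>(2) j by simp
  also have "\<dots> \<le> (\<Sum>i<p. \<bar>a (\<sigma> i)\<bar> powr q)" using j by (intro sum_mono2) auto
  also have "\<dots> = (\<Sum>i<p. \<bar>a i\<bar> powr q)"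
    using sum.permute[OF \<sigma>(1), of "\<lambda>i. \<bar>a i\<bar> powr q"] by (simp add: comp_def)
  finally show ?thesis .
qed

lemma Nclass_imp_Wclass:
  assumes q: "q > 0" and c: "Nclass P \<phi> p t q Mb link c"
  shows "Wclass P \<phi> p (t powr (1 / q)) (1 / q) Mb link c"
proof -
  obtain \<theta> where \<theta>: "\<forall>i\<ge>p. \<theta> i = 0" "(\<Sum>j<p. \<bar>\<theta> j\<bar> powr q) \<le> t" "norm2_p p \<theta> \<le> Mb"
    "\<forall>z\<in>space P. c z = link (inner_p p \<theta> (\<phi> z))"
    using c unfolding Nclass_def by blast
  have "real j powr (1 / q) * sorted_abs p \<theta> j \<le> t powr (1 / q)" if j: "j \<in> {1..p}" for j
  proof -
    have x: "0 \<le> sorted_abs p \<theta> j" using j by (intro sorted_abs_nonneg) auto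
    have "real j powr (1 / q) * sorted_abs p \<theta> j = (real j * sorted_abs p \<theta> j powr q) powr (1 / q)"
      using q x by (simp add: powr_mult powr_powr)
    also have "\<dots> \<le> t powr (1 / q)"
      using sorted_abs_powr_le_sum[OF q, of j p \<theta>] \<theta>(2) j q x by (intro powr_mono2) auto
    finally show ?thesis .
  qed
  with \<theta> show ?thesis unfolding Wclass_def by blast
qed

section \<open>Power-law tails and sparse truncation\<close>

lemma powr_diff_ge:
  fixes \<beta> x :: real
  assumes \<beta>: "\<beta> \<ge> 1" and x: "x > 0"
  shows "(\<beta> - 1) * (x + 1) powr (-\<beta>) \<le> x powr (1 - \<beta>) - (x + 1) powr (1 - \<beta>)"
proof -
  have "\<exists>z>x. z < x + 1 \<and> (x + 1) powr (1 - \<beta>) - x powr (1 - \<beta>) = (x + 1 - x) * ((1 - \<beta>) * z powr (-\<beta>))"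
  proof (rule MVT2)
    fix y assume "x \<le> y"
    with x have "y > 0" by simp
    then show "((\<lambda>y. y powr (1 - \<beta>)) has_real_derivative (1 - \<beta>) * y powr (-\<beta>)) (at y)"
      using has_real_derivative_powr[of y "1 - \<beta>"] by simp
  qed simp
  then obtain z where z: "x < z" "z < x + 1"
    and eq: "(x + 1) powr (1 - \<beta>) - x powr (1 - \<beta>) = (1 - \<beta>) * z powr (-\<beta>)"
    by auto
  have "(x + 1) powr (-\<beta>) \<le> z powr (-\<beta>)"
    using z x \<beta> by (intro powr_mono2') auto
  then have "(\<beta> - 1) * (x + 1) powr (-\<beta>) \<le> (\<beta> - 1) * z powr (-\<beta>)"
    using \<beta> by (intro mult_left_mono) auto
  with eq show ?thesis by (simp add: algebra_simps)
qed

lemma sum_powr_tail_le: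
  fixes \<beta> :: real
  assumes \<beta>: "\<beta> > 1"
  shows "(\<Sum>i\<in>{N..<M}. (real i + 1) powr (-\<beta>)) \<le> \<beta> / (\<beta> - 1) * (real N + 1) powr (1 - \<beta>)"
proof (cases "N < M")
  case False
  with \<beta> show ?thesis by simp
next
  case True
  define f where "f i = real i powr (1 - \<beta>)" for i
  have "(real i + 1) powr (-\<beta>) \<le> (f i - f (Suc i)) / (\<beta> - 1)" if "i \<in> {Suc N..<M}" for i
  proof -
    have "(\<beta> - 1) * (real i + 1) powr (-\<beta>) \<le> f i - f (Suc i)"
      using powr_diff_ge[of \<beta> "real i"] that \<beta> by (simp add: f_def add.commute)
    with \<beta> show ?thesis by (simp add: pos_le_divide_eq mult.commute)
  qed
  then have "(\<Sum>i\<in>{Suc N..<M}. (real i + 1) powr (-\<beta>)) \<le> (\<Sum>i\<in>{Suc N..<M}. (f i - f (Suc i)) / (\<beta> - 1))"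
    by (rule sum_mono)
  also have "\<dots> = (f (Suc N) - f M) / (\<beta> - 1)"
    using sum_Suc_diff'[of "Suc N" M "\<lambda>i. - f i"] True by (simp add: sum_divide_distrib[symmetric])
  also have "\<dots> \<le> (real N + 1) powr (1 - \<beta>) / (\<beta> - 1)"
    using \<beta> by (intro divide_right_mono) (auto simp: f_def add.commute)
  finally have tail: "(\<Sum>i\<in>{Suc N..<M}. (real i + 1) powr (-\<beta>)) \<le> (real N + 1) powr (1 - \<beta>) / (\<beta> - 1)" .
  have head: "(real N + 1) powr (-\<beta>) \<le> (real N + 1) powr (1 - \<beta>)"
    by (intro powr_mono) auto
  have "{N..<M} = insert N {Suc N..<M}" using True by auto
  then have "(\<Sum>i\<in>{N..<M}. (real i + 1) powr (-\<beta>)) \<le> (real N + 1) powr (1 - \<beta>) * (1 + 1 / (\<beta> - 1))"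
    using head tail by (simp add: algebra_simps)
  also have "1 + 1 / (\<beta> - 1) = \<beta> / (\<beta> - 1)" using \<beta> by (simp add: field_simps)
  finally show ?thesis by (simp add: mult.commute)
qed

lemma sum_sq_power_decay_le:
  fixes \<alpha> t :: real and x :: "nat \<Rightarrow> real"
  assumes \<alpha>: "\<alpha> > 1 / 2" and decay: "\<And>j. j \<in> {m..<N} \<Longrightarrow> \<bar>x j\<bar> * (real j + 1) powr \<alpha> \<le> t"
  shows "(\<Sum>j\<in>{m..<N}. (x j)\<^sup>2) \<le> 2 * \<alpha> / (2 * \<alpha> - 1) * (t\<^sup>2 * (real m + 1) powr (1 - 2 * \<alpha>))"
proof -
  have "(x j)\<^sup>2 \<le> t\<^sup>2 * (real j + 1) powr (- (2 * \<alpha>))" if j: "j \<in> {m..<N}" for j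
  proof -
    have "\<bar>x j\<bar> \<le> t * (real j + 1) powr (-\<alpha>)"
      using decay[OF j] by (simp add: powr_minus field_simps)
    then have "\<bar>x j\<bar>\<^sup>2 \<le> (t * (real j + 1) powr (-\<alpha>))\<^sup>2" by (intro power_mono) auto
    then show ?thesis
      by (simp add: power_mult_distrib powr_realpow[symmetric] powr_powr mult.commute)
  qed
  then have "(\<Sum>j\<in>{m..<N}. (x j)\<^sup>2) \<le> (\<Sum>j\<in>{m..<N}. t\<^sup>2 * (real j + 1) powr (- (2 * \<alpha>)))"
    by (rule sum_mono)
  also have "\<dots> = t\<^sup>2 * (\<Sum>j\<in>{m..<N}. (real j + 1) powr (- (2 * \<alpha>)))"
    by (simp add: sum_distrib_left)
  also have "\<dots> \<le> t\<^sup>2 * (2 * \<alpha> / (2 * \<alpha> - 1) * (real m + 1) powr (1 - 2 * \<alpha>))"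
    using sum_powr_tail_le[of "2 * \<alpha>" m N] \<alpha> by (intro mult_left_mono) auto
  finally show ?thesis by (simp add: algebra_simps)
qed

lemma power_decay_rate_le:
  fixes t \<alpha> s L :: real and l m :: nat
  assumes t: "t \<ge> 0" and l: "l \<in> {1, 2}" and \<alpha>: "\<alpha> > 1 / real l" and L: "L > 0"
    and s: "s = t powr (1 / \<alpha>) * (1 / L) powr (1 / (real l * \<alpha>))"
    and m: "s < real m + 1"
  shows "t\<^sup>2 * (real m + 1) powr (1 - 2 * \<alpha>) \<le> (s * L) ^ (if l = 1 then 2 else 1)"
proof (cases "t = 0")
  case True
  then show ?thesis using L s by simp
next
  case False
  with t have t: "t > 0" by simp
  define j :: nat where "j = (if l = 1 then 2 else 1)"
  have \<alpha>0: "\<alpha> > 0" using \<alpha> l by (auto simp: field_simps)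
  have s0: "s > 0" using s t L by simp
  have j: "1 \<le> real j" "real j < 2 * \<alpha>" using l \<alpha> by (auto simp: j_def field_simps)
  have s_2\<alpha>: "s powr (2 * \<alpha>) = t\<^sup>2 / L ^ j"
  proof (cases "l = 1")
    case True
    then have "s powr \<alpha> = t / L" using s \<alpha>0 t L by (simp add: powr_mult powr_powr powr_divide)
    moreover have "s powr (2 * \<alpha>) = (s powr \<alpha>)\<^sup>2" using powr_power[of s \<alpha> 2] s0 by simp
    ultimately show ?thesis using True by (simp add: j_def power_divide)
  next
    case False
    with l have "l = 2" by simp
    then show ?thesis using s \<alpha>0 t L by (simp add: j_def powr_mult powr_powr powr_divide powr_numeral)
  qed
  have "(real m + 1) powr (1 - 2 * \<alpha>) \<le> (real m + 1) powr (real j - 2 * \<alpha>)"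
    using j by (intro powr_mono) auto
  also have "\<dots> \<le> s powr (real j - 2 * \<alpha>)"
    using s0 m j by (intro powr_mono2') auto
  also have "\<dots> = s ^ j * L ^ j / t\<^sup>2"
    using s0 t L by (simp add: powr_diff s_2\<alpha> powr_realpow)
  finally have "t\<^sup>2 * (real m + 1) powr (1 - 2 * \<alpha>) \<le> t\<^sup>2 * (s ^ j * L ^ j / t\<^sup>2)"
    by (intro mult_left_mono) auto
  with t show ?thesis by (simp add: j_def power_mult_distrib)
qed

lemma weak_decay_sparse_approx:
  fixes \<theta> :: "nat \<Rightarrow> real"
  assumes \<alpha>: "\<alpha> > 1 / 2" and decay: "\<forall>j\<in>{1..p}. real j powr \<alpha> * sorted_abs p \<theta> j \<le> t"
  obtains a where "\<forall>i\<ge>p. a i = 0" "l0_p p a \<le> m" "norm2_p p a \<le> norm2_p p \<theta>"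
    "(norm2_p p (\<lambda>i. \<theta> i - a i))\<^sup>2 \<le> 2 * \<alpha> / (2 * \<alpha> - 1) * (t\<^sup>2 * (real m + 1) powr (1 - 2 * \<alpha>))"
proof -
  obtain \<sigma> where \<sigma>: "\<sigma> permutes {..<p}" "\<And>i. i < p \<Longrightarrow> sorted_abs p \<theta> (Suc i) = \<bar>\<theta> (\<sigma> i)\<bar>"
    using sorted_abs_permutation[of p \<theta>] by blast
  have inj: "inj_on \<sigma> {..<p}" using \<sigma>(1) by (rule permutes_inj_on)
  have img: "\<sigma> ` {..<p} = {..<p}" using \<sigma>(1) by (rule permutes_image)
  define S where "S = \<sigma> ` {..<min m p}"
  define a where "a i = (if i \<in> S then \<theta> i else 0)" for i
  have S_sub: "S \<subseteq> {..<p}" unfolding S_def using img by auto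
  have "a i = 0" if "i \<ge> p" for i using S_sub that by (auto simp: a_def)
  moreover have "l0_p p a \<le> m"
  proof -
    have "l0_p p a \<le> card S" by (rule l0_p_le_card) (auto simp: S_def a_def split: if_split_asm)
    also have "\<dots> \<le> m" unfolding S_def using card_image_le[of "{..<min m p}" \<sigma>] by simp
    finally show ?thesis .
  qed
  moreover have "norm2_p p a \<le> norm2_p p \<theta>"
    unfolding norm2_p_def a_def by (intro real_sqrt_le_mono sum_mono) auto
  moreover have "(norm2_p p (\<lambda>i. \<theta> i - a i))\<^sup>2 \<le> 2 * \<alpha> / (2 * \<alpha> - 1) * (t\<^sup>2 * (real m + 1) powr (1 - 2 * \<alpha>))"
  proof -
    have in_S: "\<sigma> i \<in> S \<longleftrightarrow> i < m" if "i < p" for i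
      using that inj unfolding S_def by (auto dest: inj_onD)
    have "(norm2_p p (\<lambda>i. \<theta> i - a i))\<^sup>2 = (\<Sum>i<p. (\<theta> i - a i)\<^sup>2)"
      unfolding norm2_p_def by (simp add: sum_nonneg)
    also have "\<dots> = (\<Sum>i<p. (\<theta> (\<sigma> i) - a (\<sigma> i))\<^sup>2)"
      using sum.permute[OF \<sigma>(1), of "\<lambda>i. (\<theta> i - a i)\<^sup>2"] by (simp add: comp_def)
    also have "\<dots> = (\<Sum>i\<in>{m..<p}. (\<theta> (\<sigma> i))\<^sup>2)"
      by (rule sum.mono_neutral_cong_right) (auto simp: a_def in_S)
    also have "\<dots> \<le> 2 * \<alpha> / (2 * \<alpha> - 1) * (t\<^sup>2 * (real m + 1) powr (1 - 2 * \<alpha>))"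
    proof (rule sum_sq_power_decay_le[OF \<alpha>])
      fix i assume "i \<in> {m..<p}"
      then have "real (Suc i) powr \<alpha> * sorted_abs p \<theta> (Suc i) \<le> t"
        using decay by (simp del: of_nat_Suc)
      then show "\<bar>\<theta> (\<sigma> i)\<bar> * (real i + 1) powr \<alpha> \<le> t"
        using \<sigma>(2)[of i] \<open>i \<in> {m..<p}\<close> by (simp add: mult.commute add.commute)
    qed
    finally show ?thesis .
  qed
  ultimately show ?thesis using that by blast
qed

lemma AGLS_of_power_decay_remainder:
  fixes t \<alpha> s C :: real and l n p :: nat
  assumes t: "t \<ge> 0" and l: "l \<in> {1, 2}" and \<alpha>: "\<alpha> > 1 / real l" and p: "p \<ge> 2" and n: "n \<ge> 1"
    and s: "s = t powr (1 / \<alpha>) * (real n / ln (real p)) powr (1 / (real l * \<alpha>))"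
    and a: "\<forall>i\<ge>p. a i = 0" "l0_p p a \<le> nat \<lfloor>s\<rfloor>"
    and c: "\<forall>z\<in>space P. c z = link (inner_p p a (\<phi> z)) + r z"
    and r: "r \<in> borel_measurable P" "integrable P (\<lambda>z. (r z)\<^sup>2)"
    and r_bound: "(\<integral>z. (r z)\<^sup>2 \<partial>P) \<le> C * (t\<^sup>2 * (real (nat \<lfloor>s\<rfloor>) + 1) powr (1 - 2 * \<alpha>))"
    and C: "C \<ge> 0"
  shows "AGLS P \<phi> p n s (if l = 1 then 2 else 1) link C c"
proof -
  define L where "L = ln (real p) / real n"
  have L: "L > 0" unfolding L_def using p n by simp
  have s0: "s \<ge> 0" unfolding s by simp
  have "t\<^sup>2 * (real (nat \<lfloor>s\<rfloor>) + 1) powr (1 - 2 * \<alpha>) \<le> (s * L) ^ (if l = 1 then 2 else 1)"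
    using s0 by (intro power_decay_rate_le[OF t l \<alpha> L]) (auto simp: s L_def)
  then have "C * (t\<^sup>2 * (real (nat \<lfloor>s\<rfloor>) + 1) powr (1 - 2 * \<alpha>))
      \<le> C * (s * ln (real p) / real n) ^ (if l = 1 then 2 else 1)"
    using C unfolding L_def by (intro mult_left_mono) simp_all
  with r_bound have "(\<integral>z. (r z)\<^sup>2 \<partial>P) \<le> C * (s * ln (real p) / real n) ^ (if l = 1 then 2 else 1)"
    by (rule order_trans)
  moreover have "real (l0_p p a) \<le> s" using a(2) s0 by linarith
  ultimately show ?thesis
    unfolding AGLS_def using a c r by blast
qed

section \<open>Sub-Gaussian projections and the link\<close>

lemma psi2_le_moment_le:
  assumes P: "prob_space P" and W: "psi2_le P W C" and C: "C \<ge> 0"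
  shows "integrable P (\<lambda>z. \<bar>W z\<bar> ^ k) \<and> (\<integral>z. \<bar>W z\<bar> ^ k \<partial>P) \<le> (C * sqrt (real k)) ^ k"
proof (cases "k = 0")
  case True
  interpret prob_space P by (rule P)
  from True show ?thesis by (simp add: prob_space)
next
  case False
  with W have int: "integrable P (\<lambda>z. \<bar>W z\<bar> ^ k)"
    and le: "(\<integral>z. \<bar>W z\<bar> ^ k \<partial>P) powr (1 / real k) \<le> C * sqrt (real k)"
    unfolding psi2_le_def by auto
  define I where "I = (\<integral>z. \<bar>W z\<bar> ^ k \<partial>P)"
  have I0: "I \<ge> 0" unfolding I_def by simp
  have "I = (I powr (1 / real k)) ^ k"
    using False I0 by (simp add: powr_realpow'[symmetric] powr_powr)
  also have "\<dots> \<le> (C * sqrt (real k)) ^ k"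
    using le unfolding I_def by (intro power_mono) auto
  finally show ?thesis using int unfolding I_def by simp
qed

lemma pow_div_fact_le_exp:
  fixes x :: real
  assumes "x \<ge> 0"
  shows "x ^ n / fact n \<le> exp x"
proof -
  have s: "(\<lambda>n. x ^ n /\<^sub>R fact n) sums exp x" by (rule exp_converges)
  have "sum (\<lambda>n. x ^ n /\<^sub>R fact n) {n} \<le> suminf (\<lambda>n. x ^ n /\<^sub>R fact n)"
    using s assms by (intro sum_le_suminf) (auto simp: sums_iff)
  then show ?thesis using s by (simp add: sums_iff divide_inverse mult.commute)
qed

lemma subgaussian_moment_term_le:
  fixes B C :: real
  assumes B: "B \<ge> 0" and C: "C \<ge> 0"
  defines "D \<equiv> B * C * sqrt (exp 1)"
  shows "B ^ k * (C * sqrt (real k)) ^ k / fact k \<le> ((2 * D\<^sup>2) ^ k / fact k + (1 / 2) ^ k) / 2"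
proof -
  have "sqrt (real k) ^ k = sqrt (real k ^ k)" by (simp add: real_sqrt_power)
  also have "\<dots> \<le> sqrt (exp (real k) * fact k)"
    using pow_div_fact_le_exp[of "real k" k] by (simp add: field_simps)
  also have "\<dots> = sqrt (exp 1) ^ k * sqrt (fact k)"
    by (simp add: real_sqrt_mult real_sqrt_power[symmetric] exp_of_nat_mult[symmetric])
  finally have sk: "sqrt (real k) ^ k \<le> sqrt (exp 1) ^ k * sqrt (fact k)" .
  have "B ^ k * (C * sqrt (real k)) ^ k / fact k = (B * C) ^ k * sqrt (real k) ^ k / fact k"
    by (simp add: power_mult_distrib)
  also have "\<dots> \<le> (B * C) ^ k * (sqrt (exp 1) ^ k * sqrt (fact k)) / fact k"
    using sk B C by (intro divide_right_mono mult_left_mono) auto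
  also have "\<dots> = D ^ k / sqrt (fact k)"
  proof -
    have "fact k = sqrt (fact k) * sqrt (fact k)" by simp
    then show ?thesis unfolding D_def by (simp add: power_mult_distrib field_simps)
  qed
  also have "\<dots> \<le> ((2 * D\<^sup>2) ^ k / fact k + (1 / 2) ^ k) / 2"
  proof -
    \<comment> \<open>AM-GM with the factor \<open>sqrt (2 ^ k)\<close> moved between the two terms\<close>
    define X where "X = D ^ k * sqrt (2 ^ k) / sqrt (fact k)"
    define Y where "Y = 1 / sqrt (2 ^ k)"
    have "D ^ k / sqrt (fact k) = X * Y" unfolding X_def Y_def by simp
    also have "\<dots> \<le> (X\<^sup>2 + Y\<^sup>2) / 2" using sum_squares_bound[of X Y] by (simp add: field_simps)
    also have "X\<^sup>2 = (2 * D\<^sup>2) ^ k / fact k" unfolding X_def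
      by (simp add: power_divide power_mult_distrib power_mult[symmetric] mult.commute power2_eq_square)
    also have "Y\<^sup>2 = (1 / 2) ^ k" unfolding Y_def by (simp add: power_divide power_one_over)
    finally show ?thesis .
  qed
  finally show ?thesis .
qed

lemma summable_subgaussian_moments:
  fixes B C :: real
  assumes B: "B \<ge> 0" and C: "C \<ge> 0"
  shows "summable (\<lambda>k. B ^ k * (C * sqrt (real k)) ^ k / fact k)"
proof -
  define D where "D = B * C * sqrt (exp 1)"
  have "summable (\<lambda>k. (2 * D\<^sup>2) ^ k / fact k)"
    using summable_exp[of "2 * D\<^sup>2"] by (simp add: divide_inverse mult.commute)
  then have "summable (\<lambda>k. ((2 * D\<^sup>2) ^ k / fact k + (1 / 2 :: real) ^ k) / 2)"
    by (intro summable_divide summable_add summable_geometric) simp_all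
  then show ?thesis
    by (rule summable_comparison_test'[where N = 0])
      (use subgaussian_moment_term_le[OF B C] B C in \<open>auto simp: D_def\<close>)
qed

definition subgaussian_exp_bound :: "real \<Rightarrow> real \<Rightarrow> real" where
  "subgaussian_exp_bound B C = (\<Sum>k. B ^ k * (C * sqrt (real k)) ^ k / fact k)"

lemma subgaussian_exp_bound_nonneg:
  "B \<ge> 0 \<Longrightarrow> C \<ge> 0 \<Longrightarrow> subgaussian_exp_bound B C \<ge> 0"
  unfolding subgaussian_exp_bound_def by (intro suminf_nonneg summable_subgaussian_moments) auto

lemma psi2_le_exp_integral_le:
  assumes P: "prob_space P" and W: "psi2_le P W C" and C: "C \<ge> 0" and B: "B \<ge> 0"
  shows "integrable P (\<lambda>z. exp (B * \<bar>W z\<bar>)) \<and> (\<integral>z. exp (B * \<bar>W z\<bar>) \<partial>P) \<le> subgaussian_exp_bound B C"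
proof -
  define f where "f k z = B ^ k / fact k * \<bar>W z\<bar> ^ k" for k z
  have f_nonneg: "f k z \<ge> 0" for k z unfolding f_def using B by simp
  have f_int: "integrable P (f k)" for k
    unfolding f_def using psi2_le_moment_le[OF P W C, of k] by auto
  have f_le: "(\<integral>z. f k z \<partial>P) \<le> B ^ k * (C * sqrt (real k)) ^ k / fact k" for k
  proof -
    have "(\<integral>z. f k z \<partial>P) = B ^ k / fact k * (\<integral>z. \<bar>W z\<bar> ^ k \<partial>P)"
      unfolding f_def by simp
    also have "\<dots> \<le> B ^ k / fact k * (C * sqrt (real k)) ^ k"
      using psi2_le_moment_le[OF P W C, of k] B by (intro mult_left_mono) auto
    finally show ?thesis by simp
  qed
  have sums: "(\<lambda>k. f k z) sums exp (B * \<bar>W z\<bar>)" for z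
    using exp_converges[of "B * \<bar>W z\<bar>"]
    by (simp add: f_def power_mult_distrib divide_inverse mult.commute mult.left_commute)
  have summable_int: "summable (\<lambda>k. \<integral>z. norm (f k z) \<partial>P)"
    by (rule summable_comparison_test'[OF summable_subgaussian_moments[OF B C], where N = 0])
      (use f_le f_nonneg in auto)
  have exp_eq: "(\<lambda>z. exp (B * \<bar>W z\<bar>)) = (\<lambda>z. \<Sum>k. f k z)"
    using sums by (auto simp: sums_iff)
  have "integrable P (\<lambda>z. \<Sum>k. f k z)"
    by (rule integrable_suminf) (use f_int f_nonneg sums summable_int in \<open>auto simp: sums_iff\<close>)
  moreover have "(\<integral>z. (\<Sum>k. f k z) \<partial>P) = (\<Sum>k. \<integral>z. f k z \<partial>P)"
    by (rule integral_suminf) (use f_int f_nonneg sums summable_int in \<open>auto simp: sums_iff\<close>)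
  moreover have "(\<Sum>k. \<integral>z. f k z \<partial>P) \<le> subgaussian_exp_bound B C"
    unfolding subgaussian_exp_bound_def
    by (rule suminf_le[OF f_le _ summable_subgaussian_moments[OF B C]])
      (use summable_int f_nonneg in simp)
  ultimately show ?thesis unfolding exp_eq by simp
qed

lemma continuous_on_exp_lipschitz:
  fixes f :: "real \<Rightarrow> real"
  assumes f: "\<forall>u v. \<bar>f u - f v\<bar> \<le> K * exp (K * (\<bar>u\<bar> + \<bar>v\<bar>)) * \<bar>u - v\<bar>"
  shows "continuous_on UNIV f"
  unfolding continuous_on_def
proof
  fix x :: real
  have "((\<lambda>y. K * exp (K * (\<bar>y\<bar> + \<bar>x\<bar>)) * \<bar>y - x\<bar>) \<longlongrightarrow> 0) (at x within UNIV)"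
    using tendsto_intros(1)[of "\<lambda>y. K * exp (K * (\<bar>y\<bar> + \<bar>x\<bar>)) * \<bar>y - x\<bar>"]
    by (auto intro!: tendsto_eq_intros)
  then have "((\<lambda>y. f y - f x) \<longlongrightarrow> 0) (at x within UNIV)"
    by (rule tendsto_0_le[where K = 1, OF _ always_eventually])
      (auto intro: order_trans[OF f[rule_format] abs_ge_self])
  then show "(f \<longlongrightarrow> f x) (at x within UNIV)"
    by (simp add: LIM_zero_iff)
qed

lemma exp_lipschitz_diff_sq_le:
  fixes f :: "real \<Rightarrow> real"
  assumes f: "\<forall>u v. \<bar>f u - f v\<bar> \<le> K * exp (K * (\<bar>u\<bar> + \<bar>v\<bar>)) * \<bar>u - v\<bar>" and K: "K \<ge> 0"
    and x: "\<bar>x\<bar> \<le> M * \<bar>u\<bar>" and y: "\<bar>y\<bar> \<le> M * \<bar>v\<bar>" and xy: "\<bar>x - y\<bar> \<le> c * \<bar>w\<bar>"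
  shows "(f x - f y)\<^sup>2 \<le> K\<^sup>2 * c\<^sup>2 * ((exp (8 * K * M * \<bar>u\<bar>) + exp (8 * K * M * \<bar>v\<bar>)) / 4 + \<bar>w\<bar> ^ 4 / 2)"
proof -
  define G where "G = exp (K * M * (\<bar>u\<bar> + \<bar>v\<bar>))"
  have "exp (K * (\<bar>x\<bar> + \<bar>y\<bar>)) \<le> G"
    unfolding G_def using mult_left_mono[OF x K] mult_left_mono[OF y K] by (simp add: algebra_simps)
  then have "\<bar>f x - f y\<bar> \<le> K * G * (c * \<bar>w\<bar>)"
    using f[rule_format, of x y] xy K by (smt (verit) mult_mono mult_nonneg_nonneg abs_ge_zero exp_gt_zero)
  then have "(f x - f y)\<^sup>2 \<le> (K * G * (c * \<bar>w\<bar>))\<^sup>2"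
    by (metis abs_ge_zero power2_abs power_mono)
  also have "\<dots> = K\<^sup>2 * c\<^sup>2 * (G\<^sup>2 * w\<^sup>2)"
    by (simp add: power_mult_distrib)
  also have "\<dots> \<le> K\<^sup>2 * c\<^sup>2 * ((exp (8 * K * M * \<bar>u\<bar>) + exp (8 * K * M * \<bar>v\<bar>)) / 4 + \<bar>w\<bar> ^ 4 / 2)"
  proof (rule mult_left_mono)
    have "G\<^sup>2 * w\<^sup>2 \<le> ((G\<^sup>2)\<^sup>2 + (w\<^sup>2)\<^sup>2) / 2"
      using sum_squares_bound[of "G\<^sup>2" "w\<^sup>2"] by (simp add: field_simps)
    also have "(G\<^sup>2)\<^sup>2 = exp (4 * K * M * \<bar>u\<bar>) * exp (4 * K * M * \<bar>v\<bar>)"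
      unfolding G_def by (simp add: exp_add[symmetric] flip: exp_of_nat_mult) (simp add: algebra_simps)
    also have "\<dots> \<le> ((exp (4 * K * M * \<bar>u\<bar>))\<^sup>2 + (exp (4 * K * M * \<bar>v\<bar>))\<^sup>2) / 2"
      using sum_squares_bound[of "exp (4 * K * M * \<bar>u\<bar>)" "exp (4 * K * M * \<bar>v\<bar>)"]
      by (simp add: field_simps)
    also have "(w\<^sup>2)\<^sup>2 = \<bar>w\<bar> ^ 4"
      by (simp flip: power_mult)
    finally show "G\<^sup>2 * w\<^sup>2 \<le> (exp (8 * K * M * \<bar>u\<bar>) + exp (8 * K * M * \<bar>v\<bar>)) / 4 + \<bar>w\<bar> ^ 4 / 2"
      by (simp add: exp_add[symmetric] flip: exp_of_nat_mult) (simp add: field_simps)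
  qed simp
  finally show ?thesis .
qed

lemma exp_lipschitz_diff_sq_integral_le:
  fixes P :: "'z measure" and f :: "real \<Rightarrow> real"
  assumes P: "prob_space P" and K: "K \<ge> 0" and M: "M \<ge> 0"
    and f: "\<forall>u v. \<bar>f u - f v\<bar> \<le> K * exp (K * (\<bar>u\<bar> + \<bar>v\<bar>)) * \<bar>u - v\<bar>"
    and U: "psi2_le P U K" and V: "psi2_le P V K" and W: "psi2_le P W K"
    and X: "X \<in> borel_measurable P" "\<And>z. \<bar>X z\<bar> \<le> M * \<bar>U z\<bar>"
    and Y: "Y \<in> borel_measurable P" "\<And>z. \<bar>Y z\<bar> \<le> M * \<bar>V z\<bar>"
    and XY: "\<And>z. \<bar>X z - Y z\<bar> \<le> c * \<bar>W z\<bar>"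
  shows "integrable P (\<lambda>z. (f (X z) - f (Y z))\<^sup>2)"
    and "(\<integral>z. (f (X z) - f (Y z))\<^sup>2 \<partial>P) \<le> K\<^sup>2 * (subgaussian_exp_bound (8 * K * M) K / 2 + 8 * K ^ 4) * c\<^sup>2"
proof -
  define B where "B = 8 * K * M"
  have B: "B \<ge> 0" unfolding B_def using K M by simp
  define H where "H z = (exp (B * \<bar>U z\<bar>) + exp (B * \<bar>V z\<bar>)) / 4 + \<bar>W z\<bar> ^ 4 / 2" for z
  note expU = psi2_le_exp_integral_le[OF P U K B] and expV = psi2_le_exp_integral_le[OF P V K B]
  have W4: "integrable P (\<lambda>z. \<bar>W z\<bar> ^ 4) \<and> (\<integral>z. \<bar>W z\<bar> ^ 4 \<partial>P) \<le> 16 * K ^ 4"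
    using psi2_le_moment_le[OF P W K, of 4] by (simp add: power_mult_distrib)
  have H_int: "integrable P (\<lambda>z. K\<^sup>2 * c\<^sup>2 * H z)" unfolding H_def using expU expV W4 by simp
  have "(\<integral>z. H z \<partial>P) = ((\<integral>z. exp (B * \<bar>U z\<bar>) \<partial>P) + (\<integral>z. exp (B * \<bar>V z\<bar>) \<partial>P)) / 4
      + (\<integral>z. \<bar>W z\<bar> ^ 4 \<partial>P) / 2"
    unfolding H_def using expU expV W4 by simp
  also have "\<dots> \<le> (subgaussian_exp_bound B K + subgaussian_exp_bound B K) / 4 + 16 * K ^ 4 / 2"
    using expU expV W4 by (intro add_mono divide_right_mono) auto
  finally have H_le: "(\<integral>z. H z \<partial>P) \<le> subgaussian_exp_bound B K / 2 + 8 * K ^ 4" by simp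
  have fXY_le: "(f (X z) - f (Y z))\<^sup>2 \<le> K\<^sup>2 * c\<^sup>2 * H z" for z
    unfolding H_def B_def using X(2) Y(2) XY by (rule exp_lipschitz_diff_sq_le[OF f K])
  have "f \<in> borel_measurable borel"
    using continuous_on_exp_lipschitz[OF f] by (rule borel_measurable_continuous_onI)
  with X(1) Y(1) have "(\<lambda>z. (f (X z) - f (Y z))\<^sup>2) \<in> borel_measurable P" by measurable
  then show fXY_int: "integrable P (\<lambda>z. (f (X z) - f (Y z))\<^sup>2)"
    by (rule Bochner_Integration.integrable_bound[OF H_int])
      (use fXY_le in \<open>auto intro!: AE_I2 order_trans[OF _ abs_ge_self]\<close>)
  have "(\<integral>z. (f (X z) - f (Y z))\<^sup>2 \<partial>P) \<le> (\<integral>z. K\<^sup>2 * c\<^sup>2 * H z \<partial>P)"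
    using fXY_int H_int fXY_le by (intro integral_mono) auto
  also have "\<dots> = K\<^sup>2 * c\<^sup>2 * (\<integral>z. H z \<partial>P)" by simp
  also have "\<dots> \<le> K\<^sup>2 * c\<^sup>2 * (subgaussian_exp_bound B K / 2 + 8 * K ^ 4)"
    using H_le by (intro mult_left_mono) auto
  finally show "(\<integral>z. (f (X z) - f (Y z))\<^sup>2 \<partial>P) \<le> K\<^sup>2 * (subgaussian_exp_bound (8 * K * M) K / 2 + 8 * K ^ 4) * c\<^sup>2"
    by (simp add: B_def mult_ac)
qed

lemma link_inner_diff_sq_integral_le:
  fixes P :: "'z measure" and \<phi> :: "'z \<Rightarrow> nat \<Rightarrow> real" and link :: "real \<Rightarrow> real"
  assumes P: "prob_space P" and K: "K \<ge> 0" and p: "p \<ge> 1"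
    and psi2: "\<And>\<Delta>. norm2_p p \<Delta> = 1 \<Longrightarrow> psi2_le P (\<lambda>z. inner_p p \<Delta> (\<phi> z)) K"
    and link: "\<forall>u v. \<bar>link u - link v\<bar> \<le> K * exp (K * (\<bar>u\<bar> + \<bar>v\<bar>)) * \<bar>u - v\<bar>"
    and a: "norm2_p p a \<le> Mb" and b: "norm2_p p b \<le> Mb"
  defines "r \<equiv> \<lambda>z. link (inner_p p a (\<phi> z)) - link (inner_p p b (\<phi> z))"
  shows "r \<in> borel_measurable P" and "integrable P (\<lambda>z. (r z)\<^sup>2)"
    and "(\<integral>z. (r z)\<^sup>2 \<partial>P)
      \<le> K\<^sup>2 * (subgaussian_exp_bound (8 * K * Mb) K / 2 + 8 * K ^ 4) * (norm2_p p (\<lambda>i. a i - b i))\<^sup>2"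
proof -
  define d where "d = (\<lambda>i. a i - b i)"
  obtain ea where ea: "norm2_p p ea = 1" "\<And>x. inner_p p a x = norm2_p p a * inner_p p ea x"
    using inner_p_unit_decomp[OF p] by blast
  obtain eb where eb: "norm2_p p eb = 1" "\<And>x. inner_p p b x = norm2_p p b * inner_p p eb x"
    using inner_p_unit_decomp[OF p] by blast
  obtain ed where ed: "norm2_p p ed = 1" "\<And>x. inner_p p d x = norm2_p p d * inner_p p ed x"
    using inner_p_unit_decomp[OF p] by blast
  have U: "psi2_le P (\<lambda>z. inner_p p ea (\<phi> z)) K" and V: "psi2_le P (\<lambda>z. inner_p p eb (\<phi> z)) K"
    and W: "psi2_le P (\<lambda>z. inner_p p ed (\<phi> z)) K"
    using psi2 ea eb ed by auto
  have Mb: "Mb \<ge> 0" using a norm2_p_nonneg[of p a] by linarith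
  have "(\<lambda>z. norm2_p p a * inner_p p ea (\<phi> z)) \<in> borel_measurable P"
    and "(\<lambda>z. norm2_p p b * inner_p p eb (\<phi> z)) \<in> borel_measurable P"
    using U V unfolding psi2_le_def by auto
  then have X: "(\<lambda>z. inner_p p a (\<phi> z)) \<in> borel_measurable P"
    and Y: "(\<lambda>z. inner_p p b (\<phi> z)) \<in> borel_measurable P"
    by (simp_all flip: ea(2) eb(2))
  have a_le: "\<bar>inner_p p a (\<phi> z)\<bar> \<le> Mb * \<bar>inner_p p ea (\<phi> z)\<bar>"
    and b_le: "\<bar>inner_p p b (\<phi> z)\<bar> \<le> Mb * \<bar>inner_p p eb (\<phi> z)\<bar>" for z
    using a b unfolding ea(2) eb(2) by (simp_all add: abs_mult norm2_p_nonneg mult_right_mono)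
  have d_le: "\<bar>inner_p p a (\<phi> z) - inner_p p b (\<phi> z)\<bar> \<le> norm2_p p d * \<bar>inner_p p ed (\<phi> z)\<bar>" for z
    unfolding inner_p_diff[symmetric] d_def[symmetric] ed(2) by (simp add: abs_mult norm2_p_nonneg)
  note bound = exp_lipschitz_diff_sq_integral_le[OF P K Mb link U V W X a_le Y b_le d_le]
  have "link \<in> borel_measurable borel"
    using continuous_on_exp_lipschitz[OF link] by (rule borel_measurable_continuous_onI)
  with X Y show "r \<in> borel_measurable P" unfolding r_def by measurable
  show "integrable P (\<lambda>z. (r z)\<^sup>2)" using bound(1) by (simp add: r_def)
  show "(\<integral>z. (r z)\<^sup>2 \<partial>P)
      \<le> K\<^sup>2 * (subgaussian_exp_bound (8 * K * Mb) K / 2 + 8 * K ^ 4) * (norm2_p p (\<lambda>i. a i - b i))\<^sup>2"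
    using bound(2) by (simp add: r_def d_def)
qed

lemma Wclass_imp_AGLS:
  fixes P :: "'z measure" and \<phi> :: "'z \<Rightarrow> nat \<Rightarrow> real" and link :: "real \<Rightarrow> real"
  assumes P: "prob_space P" and K: "K \<ge> 0" and p: "p \<ge> 2" and n: "n \<ge> 1"
    and psi2: "\<And>\<Delta>. norm2_p p \<Delta> = 1 \<Longrightarrow> psi2_le P (\<lambda>z. inner_p p \<Delta> (\<phi> z)) K"
    and link: "\<forall>u v. \<bar>link u - link v\<bar> \<le> K * exp (K * (\<bar>u\<bar> + \<bar>v\<bar>)) * \<bar>u - v\<bar>"
    and l: "l \<in> {1, 2}" and \<alpha>: "\<alpha> > 1 / real l" and t: "t \<ge> 0"
    and c: "Wclass P \<phi> p t \<alpha> Mb link c"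
  shows "AGLS P \<phi> p n (t powr (1 / \<alpha>) * (real n / ln (real p)) powr (1 / (real l * \<alpha>)))
    (if l = 1 then 2 else 1) link
    (K\<^sup>2 * (subgaussian_exp_bound (8 * K * Mb) K / 2 + 8 * K ^ 4) * (2 * \<alpha> / (2 * \<alpha> - 1))) c"
proof -
  define s where "s = t powr (1 / \<alpha>) * (real n / ln (real p)) powr (1 / (real l * \<alpha>))"
  define C where "C = K\<^sup>2 * (subgaussian_exp_bound (8 * K * Mb) K / 2 + 8 * K ^ 4)"
  have \<alpha>2: "\<alpha> > 1 / 2" using l \<alpha> by auto
  obtain \<theta> where \<theta>: "\<forall>j\<in>{1..p}. real j powr \<alpha> * sorted_abs p \<theta> j \<le> t" "norm2_p p \<theta> \<le> Mb"
    "\<forall>z\<in>space P. c z = link (inner_p p \<theta> (\<phi> z))"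
    using c unfolding Wclass_def by blast
  obtain a where a: "\<forall>i\<ge>p. a i = 0" "l0_p p a \<le> nat \<lfloor>s\<rfloor>" "norm2_p p a \<le> norm2_p p \<theta>"
    "(norm2_p p (\<lambda>i. \<theta> i - a i))\<^sup>2 \<le> 2 * \<alpha> / (2 * \<alpha> - 1) * (t\<^sup>2 * (real (nat \<lfloor>s\<rfloor>) + 1) powr (1 - 2 * \<alpha>))"
    using weak_decay_sparse_approx[OF \<alpha>2 \<theta>(1)] by blast
  define r where "r z = link (inner_p p \<theta> (\<phi> z)) - link (inner_p p a (\<phi> z))" for z
  note remainder = link_inner_diff_sq_integral_le[OF P K _ psi2 link \<theta>(2) order_trans[OF a(3) \<theta>(2)],
      folded r_def C_def]
  have C: "C \<ge> 0"
    unfolding C_def using K \<theta>(2) norm2_p_nonneg[of p \<theta>]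
    by (intro mult_nonneg_nonneg add_nonneg_nonneg divide_nonneg_nonneg subgaussian_exp_bound_nonneg) auto
  have "(\<integral>z. (r z)\<^sup>2 \<partial>P) \<le> C * (norm2_p p (\<lambda>i. \<theta> i - a i))\<^sup>2"
    using remainder p by simp
  also have "\<dots> \<le> C * (2 * \<alpha> / (2 * \<alpha> - 1)) * (t\<^sup>2 * (real (nat \<lfloor>s\<rfloor>) + 1) powr (1 - 2 * \<alpha>))"
    using mult_left_mono[OF a(4) C] by (simp add: mult.assoc)
  finally have r_le: "(\<integral>z. (r z)\<^sup>2 \<partial>P) \<le> C * (2 * \<alpha> / (2 * \<alpha> - 1)) * (t\<^sup>2 * (real (nat \<lfloor>s\<rfloor>) + 1) powr (1 - 2 * \<alpha>))" .
  show ?thesis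
    unfolding s_def[symmetric] C_def[symmetric]
  proof (rule AGLS_of_power_decay_remainder[OF t l \<alpha> p n s_def a(1,2) _ _ _ r_le])
    show "\<forall>z\<in>space P. c z = link (inner_p p a (\<phi> z)) + r z" using \<theta>(3) by (simp add: r_def)
    show "r \<in> borel_measurable P" "integrable P (\<lambda>z. (r z)\<^sup>2)" using remainder p by simp_all
    show "0 \<le> C * (2 * \<alpha> / (2 * \<alpha> - 1))" using C \<alpha>2 by simp
  qed
qed

section \<open>Series in an orthonormal basis of L2 on the unit cube\<close>

lemma L2cube_measurable: "L2cube g \<Longrightarrow> g \<in> borel_measurable (lebesgue_on unit_cube)"
  by (simp add: L2cube_def)

lemma L2cube_integrable_sq: "L2cube g \<Longrightarrow> integrable (lebesgue_on unit_cube) (\<lambda>x. (g x)\<^sup>2)"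
  by (simp add: L2cube_def)

lemma L2cube_integrable_mult:
  assumes g: "L2cube g" and h: "L2cube h"
  shows "integrable (lebesgue_on unit_cube) (\<lambda>x. g x * h x)"
proof (rule Bochner_Integration.integrable_bound)
  show "integrable (lebesgue_on unit_cube) (\<lambda>x. (g x)\<^sup>2 + (h x)\<^sup>2)"
    using g h by (simp add: L2cube_integrable_sq)
  show "(\<lambda>x. g x * h x) \<in> borel_measurable (lebesgue_on unit_cube)"
    using borel_measurable_times[OF L2cube_measurable[OF g] L2cube_measurable[OF h]] .
  have "\<bar>g x * h x\<bar> \<le> (g x)\<^sup>2 + (h x)\<^sup>2" for x
  proof -
    have "2 * \<bar>g x * h x\<bar> \<le> (g x)\<^sup>2 + (h x)\<^sup>2"
      using sum_squares_bound[of "\<bar>g x\<bar>" "\<bar>h x\<bar>"] by (simp add: abs_mult)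
    then show ?thesis by simp
  qed
  then show "AE x in lebesgue_on unit_cube. norm (g x * h x) \<le> norm ((g x)\<^sup>2 + (h x)\<^sup>2)"
    by simp
qed

lemma L2cube_add:
  assumes g: "L2cube g" and h: "L2cube h"
  shows "L2cube (\<lambda>x. g x + h x)"
proof -
  have "(\<lambda>x. (g x + h x)\<^sup>2) = (\<lambda>x. (g x)\<^sup>2 + 2 * (g x * h x) + (h x)\<^sup>2)"
    by (simp add: power2_sum algebra_simps)
  with L2cube_integrable_mult[OF g h] L2cube_integrable_sq[OF g] L2cube_integrable_sq[OF h]
    borel_measurable_add[OF L2cube_measurable[OF g] L2cube_measurable[OF h]]
  show ?thesis unfolding L2cube_def by simp
qed

lemma L2cube_cmult:
  assumes "L2cube g"
  shows "L2cube (\<lambda>x. a * g x)"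
  using assms unfolding L2cube_def by (auto simp: power_mult_distrib)

lemma L2cube_diff:
  assumes g: "L2cube g" and h: "L2cube h"
  shows "L2cube (\<lambda>x. g x - h x)"
  using L2cube_add[OF g L2cube_cmult[OF h, of "-1"]] by simp

lemma L2cube_sum:
  assumes "\<And>i. i \<in> I \<Longrightarrow> L2cube (g i)"
  shows "L2cube (\<lambda>x. \<Sum>i\<in>I. g i x)"
  using assms
proof (induction I rule: infinite_finite_induct)
  case (insert i F)
  then show ?case by (simp add: L2cube_add)
qed (simp_all add: L2cube_def)

lemma L2_onb_integral_sum_sq:
  assumes onb: "L2_onb \<phi>" and fin: "finite I" and inj: "inj_on \<gamma> I"
  shows "(\<integral>x. (\<Sum>i\<in>I. a i * \<phi> (\<gamma> i) x)\<^sup>2 \<partial>lebesgue_on unit_cube) = (\<Sum>i\<in>I. (a i)\<^sup>2)"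
proof -
  have L2: "L2cube (\<phi> j)" for j using onb unfolding L2_onb_def by auto
  have "(\<lambda>x. (\<Sum>i\<in>I. a i * \<phi> (\<gamma> i) x)\<^sup>2) = (\<lambda>x. \<Sum>i\<in>I. \<Sum>k\<in>I. a i * a k * (\<phi> (\<gamma> i) x * \<phi> (\<gamma> k) x))"
    by (auto simp: power2_eq_square sum_product algebra_simps)
  then have "(\<integral>x. (\<Sum>i\<in>I. a i * \<phi> (\<gamma> i) x)\<^sup>2 \<partial>lebesgue_on unit_cube)
     = (\<Sum>i\<in>I. \<Sum>k\<in>I. a i * a k * L2inner (\<phi> (\<gamma> i)) (\<phi> (\<gamma> k)))"
    using L2cube_integrable_mult[OF L2 L2] by (simp add: L2inner_def integrable_sum)
  also have "\<dots> = (\<Sum>i\<in>I. \<Sum>k\<in>I. if i = k then a i * a k else 0)"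
    using onb inj unfolding L2_onb_def by (intro sum.cong refl) (auto dest: inj_onD)
  also have "\<dots> = (\<Sum>i\<in>I. (a i)\<^sup>2)" using fin by (simp add: power2_eq_square)
  finally show ?thesis .
qed

lemma integral_sq_le_of_L2_approx:
  fixes M :: "'a measure" and r :: "'a \<Rightarrow> real" and T :: real
  assumes lim: "(\<lambda>N. \<integral>x. (r x - R N x)\<^sup>2 \<partial>M) \<longlonglongrightarrow> 0"
    and r: "integrable M (\<lambda>x. (r x)\<^sup>2)" and R: "\<And>N. integrable M (\<lambda>x. (R N x)\<^sup>2)"
    and rR: "\<And>N. integrable M (\<lambda>x. (r x - R N x)\<^sup>2)"
    and T: "\<And>N. (\<integral>x. (R N x)\<^sup>2 \<partial>M) \<le> T"
  shows "(\<integral>x. (r x)\<^sup>2 \<partial>M) \<le> 2 * T"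
proof (rule tendsto_lowerbound)
  show "(\<lambda>N. 2 * (\<integral>x. (r x - R N x)\<^sup>2 \<partial>M) + 2 * T) \<longlonglongrightarrow> 2 * T"
    using lim by (auto intro!: tendsto_eq_intros)
  show "\<forall>\<^sub>F N in sequentially. (\<integral>x. (r x)\<^sup>2 \<partial>M) \<le> 2 * (\<integral>x. (r x - R N x)\<^sup>2 \<partial>M) + 2 * T"
  proof (rule always_eventually, rule allI)
    fix N
    have "(r x)\<^sup>2 \<le> 2 * (r x - R N x)\<^sup>2 + 2 * (R N x)\<^sup>2" for x
      using sum_squares_bound[of "r x - R N x" "R N x"] by (simp add: power2_eq_square algebra_simps)
    then have "(\<integral>x. (r x)\<^sup>2 \<partial>M) \<le> (\<integral>x. 2 * (r x - R N x)\<^sup>2 + 2 * (R N x)\<^sup>2 \<partial>M)"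
      using r R rR by (intro integral_mono) auto
    also have "\<dots> \<le> 2 * (\<integral>x. (r x - R N x)\<^sup>2 \<partial>M) + 2 * T"
      using R rR T[of N] by simp
    finally show "(\<integral>x. (r x)\<^sup>2 \<partial>M) \<le> 2 * (\<integral>x. (r x - R N x)\<^sup>2 \<partial>M) + 2 * T" .
  qed
qed simp

lemma density_integral_le:
  fixes M :: "'a measure"
  assumes f: "f \<in> borel_measurable M" "\<And>x. x \<in> space M \<Longrightarrow> 0 \<le> f x \<and> f x \<le> K"
    and g: "integrable M g" "\<And>x. x \<in> space M \<Longrightarrow> 0 \<le> g x"
  shows "integrable (density M (\<lambda>x. ennreal (f x))) g"
    and "(\<integral>x. g x \<partial>density M (\<lambda>x. ennreal (f x))) \<le> K * (\<integral>x. g x \<partial>M)"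
proof -
  have g_meas: "g \<in> borel_measurable M" using g(1) by simp
  have f_AE: "AE x in M. 0 \<le> f x" using f(2) by (intro AE_I2) simp
  have fg_le: "f x * g x \<le> K * g x" if "x \<in> space M" for x
    using f(2)[OF that] g(2)[OF that] by (intro mult_right_mono) auto
  have Kg: "integrable M (\<lambda>x. K * g x)" using g(1) by simp
  have fg: "integrable M (\<lambda>x. f x * g x)"
    by (rule Bochner_Integration.integrable_bound[OF Kg])
      (use f g_meas g(2) fg_le in \<open>auto intro!: AE_I2 intro: order_trans[OF _ abs_ge_self]\<close>)
  then show "integrable (density M (\<lambda>x. ennreal (f x))) g"
    using integrable_density[OF g_meas f(1) f_AE] by simp
  have "(\<integral>x. g x \<partial>density M (\<lambda>x. ennreal (f x))) = (\<integral>x. f x * g x \<partial>M)"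
    using integral_density[OF g_meas f(1) f_AE] by simp
  also have "\<dots> \<le> (\<integral>x. K * g x \<partial>M)"
    using fg Kg fg_le by (intro integral_mono) auto
  finally show "(\<integral>x. g x \<partial>density M (\<lambda>x. ennreal (f x))) \<le> K * (\<integral>x. g x \<partial>M)" by simp
qed

lemma inner_p_permuted_prefix:
  assumes \<pi>: "bij_betw \<pi> {..<p} {..<p}" and m: "m \<le> p"
  shows "inner_p p (\<lambda>i. if i \<in> \<pi> ` {..<m} then \<theta> (inv_into {..<p} \<pi> i) else 0) x = (\<Sum>j<m. \<theta> j * x (\<pi> j))"
proof -
  have inj: "inj_on \<pi> {..<m}" using bij_betw_imp_inj_on[OF \<pi>] m by (auto intro: inj_on_subset)
  have sub: "\<pi> ` {..<m} \<subseteq> {..<p}" using \<pi> m by (auto simp: bij_betw_def)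
  have "inner_p p (\<lambda>i. if i \<in> \<pi> ` {..<m} then \<theta> (inv_into {..<p} \<pi> i) else 0) x
      = (\<Sum>i\<in>\<pi> ` {..<m}. \<theta> (inv_into {..<p} \<pi> i) * x i)"
    unfolding inner_p_def by (rule sum.mono_neutral_cong_right) (use sub in auto)
  also have "\<dots> = (\<Sum>j<m. \<theta> (inv_into {..<p} \<pi> (\<pi> j)) * x (\<pi> j))"
    using inj by (simp add: sum.reindex)
  also have "\<dots> = (\<Sum>j<m. \<theta> j * x (\<pi> j))"
    using bij_betw_imp_inj_on[OF \<pi>] m by (intro sum.cong refl) auto
  finally show ?thesis .
qed

definition extend_perm :: "nat \<Rightarrow> (nat \<Rightarrow> nat) \<Rightarrow> nat \<Rightarrow> nat" where
  "extend_perm p \<pi> j = (if j < p then \<pi> j else j)"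

lemma inj_extend_perm:
  assumes "bij_betw \<pi> {..<p} {..<p}"
  shows "inj (extend_perm p \<pi>)"
  using bij_betw_imp_inj_on[OF assms] bij_betw_apply[OF assms] unfolding extend_perm_def
  by (intro injI) (auto split: if_splits dest: inj_onD)

lemma sum_extend_perm_split:
  assumes "m \<le> p" "p \<le> N"
  shows "(\<Sum>j<p. g j (\<pi> j)) + (\<Sum>j\<in>{p..<N}. g j j)
    = (\<Sum>j<m. g j (\<pi> j)) + (\<Sum>j\<in>{m..<N}. g j (extend_perm p \<pi> j))"
proof -
  have "(\<Sum>j<p. g j (\<pi> j)) + (\<Sum>j\<in>{p..<N}. g j j) = (\<Sum>j<N. g j (extend_perm p \<pi> j))"
    using assms sum.atLeastLessThan_concat[of 0 p N "\<lambda>j. g j (extend_perm p \<pi> j)"]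
    by (simp add: extend_perm_def atLeast0LessThan)
  also have "\<dots> = (\<Sum>j<m. g j (\<pi> j)) + (\<Sum>j\<in>{m..<N}. g j (extend_perm p \<pi> j))"
    using assms sum.atLeastLessThan_concat[of 0 m N "\<lambda>j. g j (extend_perm p \<pi> j)"]
    by (simp add: extend_perm_def atLeast0LessThan)
  finally show ?thesis .
qed

lemma L2_onb_power_decay_tail_le:
  assumes onb: "L2_onb \<phi>" and \<gamma>: "inj \<gamma>" and \<alpha>: "\<alpha> > 1 / 2"
    and decay: "\<forall>j. \<bar>\<theta> j\<bar> * real (Suc j) powr \<alpha> \<le> t"
  shows "(\<integral>x. (\<Sum>j\<in>{m..<N}. \<theta> j * \<phi> (\<gamma> j) x)\<^sup>2 \<partial>lebesgue_on unit_cube)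
    \<le> 2 * \<alpha> / (2 * \<alpha> - 1) * (t\<^sup>2 * (real m + 1) powr (1 - 2 * \<alpha>))"
proof -
  have "(\<integral>x. (\<Sum>j\<in>{m..<N}. \<theta> j * \<phi> (\<gamma> j) x)\<^sup>2 \<partial>lebesgue_on unit_cube) = (\<Sum>j\<in>{m..<N}. (\<theta> j)\<^sup>2)"
    by (rule L2_onb_integral_sum_sq[OF onb]) (use \<gamma> in \<open>auto intro: inj_on_subset\<close>)
  also have "\<dots> \<le> 2 * \<alpha> / (2 * \<alpha> - 1) * (t\<^sup>2 * (real m + 1) powr (1 - 2 * \<alpha>))"
    using decay by (intro sum_sq_power_decay_le[OF \<alpha>]) (simp add: add.commute)
  finally show ?thesis .
qed

lemma Sclass_sparse_approx:
  fixes \<phi> :: "nat \<Rightarrow> real^'d \<Rightarrow> real"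
  assumes onb: "L2_onb \<phi>" and \<alpha>: "\<alpha> > 1 / 2" and m: "m \<le> p" and c: "Sclass \<phi> p t \<alpha> c"
  obtains a where "\<forall>i\<ge>p. a i = 0" "l0_p p a \<le> m" "L2cube (\<lambda>x. c x - inner_p p a (\<lambda>i. \<phi> i x))"
    "(\<integral>x. (c x - inner_p p a (\<lambda>i. \<phi> i x))\<^sup>2 \<partial>lebesgue_on unit_cube)
      \<le> 2 * (2 * \<alpha> / (2 * \<alpha> - 1) * (t\<^sup>2 * (real m + 1) powr (1 - 2 * \<alpha>)))"
proof -
  obtain \<theta> \<pi> where c_L2: "L2cube c" and \<pi>: "bij_betw \<pi> {..<p} {..<p}"
    and decay: "\<forall>j. \<bar>\<theta> j\<bar> * real (Suc j) powr \<alpha> \<le> t"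
    and lim: "(\<lambda>N. \<integral>x. (c x - (\<Sum>j<p. \<theta> j * \<phi> (\<pi> j) x) - (\<Sum>j\<in>{p..<N}. \<theta> j * \<phi> j x))\<^sup>2
              \<partial>lebesgue_on unit_cube) \<longlonglongrightarrow> 0"
    using c unfolding Sclass_def by blast
  have \<phi>_L2: "L2cube (\<phi> j)" for j using onb unfolding L2_onb_def by auto
  define S where "S = \<pi> ` {..<m}"
  define a where "a i = (if i \<in> S then \<theta> (inv_into {..<p} \<pi> i) else 0)" for i
  have S_sub: "S \<subseteq> {..<p}" using \<pi> m by (auto simp: S_def bij_betw_def)
  have "\<forall>i\<ge>p. a i = 0" using S_sub by (auto simp: a_def)
  moreover have "l0_p p a \<le> m"
  proof -
    have "l0_p p a \<le> card S" by (rule l0_p_le_card) (auto simp: S_def a_def split: if_split_asm)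
    also have "card S \<le> m" unfolding S_def using card_image_le[of "{..<m}" \<pi>] by simp
    finally show ?thesis .
  qed
  moreover
  define r where "r x = c x - inner_p p a (\<lambda>i. \<phi> i x)" for x
  define R where "R N x = (\<Sum>j\<in>{m..<N}. \<theta> j * \<phi> (extend_perm p \<pi> j) x)" for N x
  have r_eq: "r x = c x - (\<Sum>j<m. \<theta> j * \<phi> (\<pi> j) x)" for x
    unfolding r_def a_def S_def inner_p_permuted_prefix[OF \<pi> m] ..
  have r_L2: "L2cube r" unfolding r_eq by (intro L2cube_diff c_L2 L2cube_sum L2cube_cmult \<phi>_L2)
  have R_L2: "L2cube (R N)" for N unfolding R_def by (intro L2cube_sum L2cube_cmult \<phi>_L2)
  have R_le: "(\<integral>x. (R N x)\<^sup>2 \<partial>lebesgue_on unit_cube)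
      \<le> 2 * \<alpha> / (2 * \<alpha> - 1) * (t\<^sup>2 * (real m + 1) powr (1 - 2 * \<alpha>))" for N
    unfolding R_def by (rule L2_onb_power_decay_tail_le[OF onb inj_extend_perm[OF \<pi>] \<alpha> decay])
  have "c x - (\<Sum>j<p. \<theta> j * \<phi> (\<pi> j) x) - (\<Sum>j\<in>{p..<N}. \<theta> j * \<phi> j x) = r x - R N x"
    if "N \<ge> p" for N x
    using sum_extend_perm_split[OF m that, of "\<lambda>j i. \<theta> j * \<phi> i x" \<pi>]
    unfolding r_eq R_def by simp
  then have "(\<lambda>N. \<integral>x. (r x - R N x)\<^sup>2 \<partial>lebesgue_on unit_cube) \<longlonglongrightarrow> 0"
    using lim by (subst tendsto_cong[OF eventually_sequentiallyI[of p]]) simp_all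
  then have "(\<integral>x. (r x)\<^sup>2 \<partial>lebesgue_on unit_cube)
      \<le> 2 * (2 * \<alpha> / (2 * \<alpha> - 1) * (t\<^sup>2 * (real m + 1) powr (1 - 2 * \<alpha>)))"
    using r_L2 R_L2 R_le
    by (intro integral_sq_le_of_L2_approx) (auto intro: L2cube_integrable_sq L2cube_diff[OF r_L2 R_L2])
  ultimately show ?thesis using that r_L2 unfolding r_def by blast
qed

lemma Sclass_imp_AGLS:
  fixes P :: "(real^'d) measure" and \<phi> :: "nat \<Rightarrow> real^'d \<Rightarrow> real"
  assumes P: "P = density (lebesgue_on unit_cube) (\<lambda>z. ennreal (f z))"
    and f: "f \<in> borel_measurable (lebesgue_on unit_cube)" "\<forall>z\<in>unit_cube. 0 \<le> f z \<and> f z \<le> K"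
    and onb: "L2_onb \<phi>" and p: "p \<ge> 2" and n: "n \<ge> 1"
    and l: "l \<in> {1, 2}" and \<alpha>: "\<alpha> > 1 / real l" and t: "t \<ge> 0"
    and s_le_p: "t powr (1 / \<alpha>) * (real n / ln (real p)) powr (1 / (real l * \<alpha>)) \<le> real p"
    and c: "Sclass \<phi> p t \<alpha> c"
  shows "AGLS P (\<lambda>z i. \<phi> i z) p n (t powr (1 / \<alpha>) * (real n / ln (real p)) powr (1 / (real l * \<alpha>)))
    (if l = 1 then 2 else 1) id (2 * K * (2 * \<alpha> / (2 * \<alpha> - 1))) c"
proof -
  define s where "s = t powr (1 / \<alpha>) * (real n / ln (real p)) powr (1 / (real l * \<alpha>))"
  define X where "X = t\<^sup>2 * (real (nat \<lfloor>s\<rfloor>) + 1) powr (1 - 2 * \<alpha>)"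
  have \<alpha>2: "\<alpha> > 1 / 2" using l \<alpha> by auto
  have "0 \<in> unit_cube" by (simp add: unit_cube_def)
  with f(2) have K: "K \<ge> 0" by force
  have "nat \<lfloor>s\<rfloor> \<le> p" using s_le_p unfolding s_def by linarith
  then obtain a where a: "\<forall>i\<ge>p. a i = 0" "l0_p p a \<le> nat \<lfloor>s\<rfloor>"
    and r_L2: "L2cube (\<lambda>x. c x - inner_p p a (\<lambda>i. \<phi> i x))"
    and r_le: "(\<integral>x. (c x - inner_p p a (\<lambda>i. \<phi> i x))\<^sup>2 \<partial>lebesgue_on unit_cube) \<le> 2 * (2 * \<alpha> / (2 * \<alpha> - 1) * X)"
    using Sclass_sparse_approx[OF onb \<alpha>2 _ c] unfolding X_def by blast
  define r where "r x = c x - inner_p p a (\<lambda>i. \<phi> i x)" for x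
  note transfer = density_integral_le[OF f(1), of K "\<lambda>x. (r x)\<^sup>2", folded P]
  have "(\<integral>x. (r x)\<^sup>2 \<partial>P) \<le> K * (\<integral>x. (r x)\<^sup>2 \<partial>lebesgue_on unit_cube)"
    using transfer f(2) r_L2 by (auto simp: r_def L2cube_integrable_sq)
  also have "\<dots> \<le> 2 * K * (2 * \<alpha> / (2 * \<alpha> - 1)) * X"
    using mult_left_mono[OF r_le[folded r_def] K] by (simp add: ac_simps)
  finally have r_bound: "(\<integral>x. (r x)\<^sup>2 \<partial>P) \<le> 2 * K * (2 * \<alpha> / (2 * \<alpha> - 1)) * X" .
  show ?thesis
    unfolding s_def[symmetric]
  proof (rule AGLS_of_power_decay_remainder[OF t l \<alpha> p n s_def a _ _ _ r_bound[unfolded X_def]])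
    show "\<forall>z\<in>space P. c z = id (inner_p p a (\<lambda>i. \<phi> i z)) + r z" by (simp add: r_def)
    show "r \<in> borel_measurable P"
      using L2cube_measurable[OF r_L2] unfolding P r_def by (simp add: measurable_cong_sets[OF sets_density refl])
    show "integrable P (\<lambda>z. (r z)\<^sup>2)"
      using transfer f(2) r_L2 by (auto simp: r_def L2cube_integrable_sq)
    show "0 \<le> 2 * K * (2 * \<alpha> / (2 * \<alpha> - 1))" using K \<alpha>2 by simp
  qed
qed

theorem proposition5:
  shows
  "(\<forall>(P::'z measure) (\<phi>::nat \<Rightarrow> 'z \<Rightarrow> nat \<Rightarrow> real) (p::nat \<Rightarrow> nat) (link::real \<Rightarrow> real)
       (k::real) (K::real) (l::nat) (\<alpha>::real) (Mb::real) (t::nat \<Rightarrow> real).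
     prob_space P \<and> 0 < k \<and> 0 < K \<and> (\<forall>n. 2 \<le> p n) \<and>
     (\<forall>n \<Delta>. norm2_p (p n) \<Delta> = 1 \<longrightarrow> psi2_le P (\<lambda>z. inner_p (p n) \<Delta> (\<phi> n z)) K) \<and>
     (\<forall>n lam. is_eigenvalue_p (p n) (Sigma1 P (\<phi> n)) lam \<longrightarrow> k \<le> lam \<and> lam \<le> K) \<and>
     (\<forall>u v. \<bar>link u - link v\<bar> \<le> K * exp (K * (\<bar>u\<bar> + \<bar>v\<bar>)) * \<bar>u - v\<bar>) \<and>
     l \<in> {1, 2} \<and> \<alpha> > 1 / real l \<and> 0 < Mb \<and> (\<forall>n. 0 \<le> t n) \<and>
     (\<lambda>n. t n powr (1 / \<alpha>) * (ln (real (p n)) / real n) powr (1 - 1 / (real l * \<alpha>)))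
        \<longlonglongrightarrow> 0 \<and>
     (\<forall>n. t n powr (1 / \<alpha>) * (real n / ln (real (p n))) powr (1 / (real l * \<alpha>)) \<le> real (p n))
     \<longrightarrow> (\<exists>K'. \<forall>\<^sub>F n in sequentially. \<forall>c.
            Wclass P (\<phi> n) (p n) (t n) \<alpha> Mb link c \<longrightarrow>
            AGLS P (\<phi> n) (p n) n
              (t n powr (1 / \<alpha>) * (real n / ln (real (p n))) powr (1 / (real l * \<alpha>)))
              (if l = 1 then 2 else 1) link K' c))
   \<and>
   (\<forall>(P::'z measure) (\<phi>::nat \<Rightarrow> 'z \<Rightarrow> nat \<Rightarrow> real) (p::nat \<Rightarrow> nat) (link::real \<Rightarrow> real)
       (q::real) (Mb::real) (t::nat \<Rightarrow> real).
     0 < q \<and> q < 2 \<and> 0 < Mb \<and> (\<forall>n. 2 \<le> p n) \<and> (\<forall>n. 0 \<le> t n) \<and>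
     (\<lambda>n. t n * (ln (real (p n)) / real n) powr (1 - q / 2)) \<longlonglongrightarrow> 0 \<and>
     (\<forall>n. t n * (real n / ln (real (p n))) powr (q / 2) \<le> real (p n))
     \<longrightarrow> (\<forall>n c. Nclass P (\<phi> n) (p n) (t n) q Mb link c \<longrightarrow>
              Wclass P (\<phi> n) (p n) (t n powr (1 / q)) (1 / q) Mb link c))
   \<and>
   (\<forall>(P::(real^'d::finite) measure) (f::real^'d \<Rightarrow> real) (K::real)
       (\<phi>::nat \<Rightarrow> real^'d \<Rightarrow> real) (p::nat \<Rightarrow> nat) (l::nat) (\<alpha>::real) (t::nat \<Rightarrow> real).
     prob_space P \<and> 0 < K \<and>
     f \<in> borel_measurable (lebesgue_on unit_cube) \<and>
     P = density (lebesgue_on unit_cube) (\<lambda>z. ennreal (f z)) \<and>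
     (\<forall>z\<in>unit_cube. 0 \<le> f z \<and> f z \<le> K) \<and>
     L2_onb \<phi> \<and> (\<forall>n. 2 \<le> p n) \<and>
     l \<in> {1, 2} \<and> \<alpha> > 1 / real l \<and> (\<forall>n. 0 \<le> t n) \<and>
     (\<lambda>n. t n powr (1 / \<alpha>) * (ln (real (p n)) / real n) powr (1 - 1 / (real l * \<alpha>)))
        \<longlonglongrightarrow> 0 \<and>
     (\<forall>n. t n powr (1 / \<alpha>) * (real n / ln (real (p n))) powr (1 / (real l * \<alpha>)) \<le> real (p n))
     \<longrightarrow> (\<exists>K'. \<forall>\<^sub>F n in sequentially. \<forall>c.
            Sclass \<phi> (p n) (t n) \<alpha> c \<longrightarrow>
            AGLS P (\<lambda>z i. \<phi> i z) (p n) n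
              (t n powr (1 / \<alpha>) * (real n / ln (real (p n))) powr (1 / (real l * \<alpha>)))
              (if l = 1 then 2 else 1) id K' c))"
proof (intro conjI allI impI, goal_cases)
  case (1 P \<phi> p link k K l \<alpha> Mb t)
  show ?case
    by (intro exI eventually_sequentiallyI[of 1] allI impI, rule Wclass_imp_AGLS[where K = K]) (use 1 in auto)
next
  case (2 P \<phi> p link q Mb t n c)
  then show ?case by (intro Nclass_imp_Wclass) auto
next
  case (3 P f K \<phi> p l \<alpha> t)
  show ?case
    by (intro exI eventually_sequentiallyI[of 1] allI impI, rule Sclass_imp_AGLS[where K = K]) (use 3 in auto)
qed

end
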